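(* There is a deterministic algorithm and a constant $C>0$ such that for all $k,n\in\mathbb{N}$ and every $a\in\mathcal{L}_n^k$, given oracle access to $f^a$, the algorithm finds a fixed point of $f^a$ using at most $C(k+n)$ queries. That is, $TARSKI(n,k)$ restricted to inputs from the family $\mathcal{F}=\{f^a: a\in\mathcal{L}_n^k\}$ has deterministic query complexity $O(k+n)$.
   Context: $\mathcal{L}_n^k=\{0,1,\ldots,n-1\}^k$ with the componentwise order. $TARSKI(n,k)$: given oracle access to an unknown monotone $f:\mathcal{L}_n^k\to\mathcal{L}_n^k$ (a query of $v$ returns $f(v)$), find $x$ with $f(x)=x$. For $a\in\mathcal{L}_n^k$, define $f^a$ coordinatewise: for $v\in\mathcal{L}_n^k$ and $i\in[k]$, $f^a_i(v)=v_i-1$ if $v_i>a_i$ and $v_j\le a_j$ for all $j<i$; $f^a_i(v)=v_i+1$ if $v_i<a_i$ and $v_j\ge a_j$ for all $j<i$; and $f^a_i(v)=v_i$ otherwise. Then $f^a(v)=(f^a_1(v),\ldots,f^a_k(v))$. *)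

theory Defs
  imports Main
begin

text \<open>Points of L_n^k are lists of naturals of length k with entries < n
  (coordinates are 0-indexed).\<close>
definition lattice :: "nat \<Rightarrow> nat \<Rightarrow> nat list set" where
  "lattice n k = {v. length v = k \<and> (\<forall>i<k. v ! i < n)}"

definition fa :: "nat list \<Rightarrow> nat list \<Rightarrow> nat list" where
  "fa a v = map (\<lambda>i.
      if a ! i < v ! i \<and> (\<forall>j<i. v ! j \<le> a ! j) then v ! i - 1
      else if v ! i < a ! i \<and> (\<forall>j<i. a ! j \<le> v ! j) then v ! i + 1
      else v ! i) [0..<length v]"

text \<open>Deterministic query algorithms as (well-founded) decision trees:
  either query a point and continue depending on the answer, or output a point.\<close>
datatype qtree = Ask "nat list" "nat list \<Rightarrow> qtree" | Output "nat list"

primrec run :: "(nat list \<Rightarrow> nat list) \<Rightarrow> qtree \<Rightarrow> nat list \<times> nat list list" where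
  "run f (Output x) = (x, [])"
| "run f (Ask v c) = (let r = run f (c (f v)) in (fst r, v # snd r))"

end

theory Submission
  imports Defs
begin

text \<open>The algorithm keeps the set \<open>D\<close> of coordinates \<open>l\<close> whose value \<open>a ! l\<close> it has already
  learned and a water level \<open>t\<close> below which no unlearned coordinate of \<open>a\<close> lies. It queries the
  point that has the learned values on \<open>D\<close> and \<open>t + 1\<close> (capped at \<open>n - 1\<close>) elsewhere. A coordinate
  of \<open>f\<^sup>a\<close> only ever decreases above \<open>a\<close>, so a decreasing coordinate \<open>l\<close> of the answer must be
  unlearned with \<open>a ! l = t\<close>, which is thereby learned; if no coordinate decreases, the query lies
  below \<open>a\<close> and the level can be raised. Each query learns a coordinate or raises the level, so
  after at most \<open>k + n\<close> queries the query is a fixed point.\<close>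

lemma length_fa [simp]: "length (fa a v) = length v"
  by (simp add: fa_def)

lemma nth_fa: "i < length v \<Longrightarrow> fa a v ! i =
  (if a ! i < v ! i \<and> (\<forall>j<i. v ! j \<le> a ! j) then v ! i - 1
   else if v ! i < a ! i \<and> (\<forall>j<i. a ! j \<le> v ! j) then v ! i + 1
   else v ! i)"
  unfolding fa_def by (simp only: nth_map length_upt nth_upt diff_zero add_0)

lemma fa_self: "fa a a = a"
  by (simp add: fa_def map_nth)

lemma fa_nth_less_imp_less: "i < length v \<Longrightarrow> fa a v ! i < v ! i \<Longrightarrow> a ! i < v ! i"
  by (auto simp: nth_fa split: if_splits)

text \<open>At the least coordinate above \<open>a\<close> all earlier coordinates are below \<open>a\<close>, so it decreases.\<close>
lemma fa_nondecreasing_imp_le: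
  assumes "\<And>i. i < length v \<Longrightarrow> v ! i \<le> fa a v ! i" and "i < length v"
  shows "v ! i \<le> a ! i"
proof (rule ccontr)
  assume "\<not> v ! i \<le> a ! i"
  then have ex: "\<exists>i. i < length v \<and> a ! i < v ! i" using assms(2) by auto
  define m where "m = (LEAST i. i < length v \<and> a ! i < v ! i)"
  have m: "m < length v" "a ! m < v ! m"
    using LeastI_ex[OF ex] unfolding m_def by auto
  have "v ! j \<le> a ! j" if "j < m" for j
    using not_less_Least[OF that[unfolded m_def]] that m(1) by auto
  then have "fa a v ! m < v ! m"
    using m by (simp add: nth_fa)
  then show False using assms(1)[OF m(1)] by simp
qed

definition finds_fixed_point :: "nat list \<Rightarrow> nat \<Rightarrow> nat \<Rightarrow> nat \<Rightarrow> qtree \<Rightarrow> bool" where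
  "finds_fixed_point a n k m T \<longleftrightarrow>
     (let r = run (fa a) T in
        fst r \<in> lattice n k \<and> fa a (fst r) = fst r
      \<and> set (snd r) \<subseteq> lattice n k \<and> length (snd r) \<le> m)"

lemma finds_fixed_point_Output:
  "x \<in> lattice n k \<Longrightarrow> fa a x = x \<Longrightarrow> finds_fixed_point a n k m (Output x)"
  by (simp add: finds_fixed_point_def)

lemma finds_fixed_point_Ask:
  "q \<in> lattice n k \<Longrightarrow> finds_fixed_point a n k m (c (fa a q)) \<Longrightarrow>
   finds_fixed_point a n k (Suc m) (Ask q c)"
  by (simp add: finds_fixed_point_def Let_def)

definition probe :: "nat \<Rightarrow> nat \<Rightarrow> nat list \<Rightarrow> nat set \<Rightarrow> nat \<Rightarrow> nat list" where
  "probe n k b D t = map (\<lambda>l. if l \<in> D then b ! l else min (Suc t) (n - 1)) [0..<k]"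

text \<open>The first argument is fuel bounding the number of queries; the values \<open>b ! l\<close> are only
  meaningful for \<open>l \<in> D\<close>.\<close>
fun level_search :: "nat \<Rightarrow> nat \<Rightarrow> nat \<Rightarrow> nat list \<Rightarrow> nat set \<Rightarrow> nat \<Rightarrow> qtree" where
  "level_search 0 n k b D t = Output []"
| "level_search (Suc m) n k b D t =
    (let q = probe n k b D t in
     Ask q (\<lambda>r. if r = q then Output q
                else if \<exists>l<k. r ! l < q ! l then
                  (let l = LEAST l. l < k \<and> r ! l < q ! l
                   in level_search m n k (b[l := t]) (insert l D) t)
                else level_search m n k b D (Suc t)))"

definition level_search_inv :: "nat list \<Rightarrow> nat \<Rightarrow> nat \<Rightarrow> nat list \<Rightarrow> nat set \<Rightarrow> nat \<Rightarrow> bool" where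
  "level_search_inv a n k b D t \<longleftrightarrow>
     a \<in> lattice n k \<and> length b = k \<and> D \<subseteq> {..<k} \<and> (\<forall>l\<in>D. b ! l = a ! l)
   \<and> (\<forall>l<k. l \<notin> D \<longrightarrow> t \<le> a ! l) \<and> t < n"

context
  fixes a n k b D t
  assumes inv: "level_search_inv a n k b D t"
begin

lemma length_probe: "length (probe n k b D t) = k"
  by (simp add: probe_def)

lemma nth_probe:
  "l < k \<Longrightarrow> probe n k b D t ! l = (if l \<in> D then a ! l else min (Suc t) (n - 1))"
  using inv by (simp add: probe_def level_search_inv_def)

lemma probe_in_lattice: "probe n k b D t \<in> lattice n k"
  using inv by (auto simp: lattice_def length_probe nth_probe level_search_inv_def)

lemma level_search_inv_learn:
  assumes "l < k" and "fa a (probe n k b D t) ! l < probe n k b D t ! l"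
  shows "l \<notin> D" and "level_search_inv a n k (b[l := t]) (insert l D) t"
proof -
  have "a ! l < probe n k b D t ! l"
    using fa_nth_less_imp_less assms by (simp add: length_probe)
  then have "l \<notin> D" and "a ! l = t"
    using inv assms(1) by (auto simp: nth_probe level_search_inv_def split: if_splits)
  then show "l \<notin> D" and "level_search_inv a n k (b[l := t]) (insert l D) t"
    using inv assms(1) by (auto simp: level_search_inv_def nth_list_update)
qed

lemma level_search_inv_raise:
  assumes "fa a (probe n k b D t) \<noteq> probe n k b D t"
    and "\<not> (\<exists>l<k. fa a (probe n k b D t) ! l < probe n k b D t ! l)"
  shows "level_search_inv a n k b D (Suc t)"
proof -
  have below: "probe n k b D t ! l \<le> a ! l" if "l < k" for l
    using fa_nondecreasing_imp_le[of "probe n k b D t" a l] assms(2) that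
    by (fastforce simp: length_probe)
  have "Suc t < n"
  proof (rule ccontr)
    assume "\<not> Suc t < n"
    then have "probe n k b D t ! l = a ! l" if "l < k" for l
      using below[OF that] inv that
      by (auto simp: nth_probe level_search_inv_def lattice_def split: if_splits)
    then have "probe n k b D t = a"
      using inv by (intro nth_equalityI) (auto simp: length_probe level_search_inv_def lattice_def)
    then show False using assms(1) fa_self by metis
  qed
  then show ?thesis
    using inv below by (force simp: level_search_inv_def nth_probe)
qed

end

lemma level_search_correct:
  "level_search_inv a n k b D t \<Longrightarrow> (k - card D) + (n - t) \<le> m \<Longrightarrow>
   finds_fixed_point a n k m (level_search m n k b D t)"
proof (induction m arbitrary: b D t)
  case 0
  then show ?case by (auto simp: level_search_inv_def)
next
  case (Suc m)
  note inv = Suc.prems(1)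
  define q where "q = probe n k b D t"
  have "finds_fixed_point a n k m
      (if fa a q = q then Output q
       else if \<exists>l<k. fa a q ! l < q ! l then
         (let l = LEAST l. l < k \<and> fa a q ! l < q ! l
          in level_search m n k (b[l := t]) (insert l D) t)
       else level_search m n k b D (Suc t))"
  proof (cases "fa a q = q")
    case True
    then show ?thesis
      using probe_in_lattice[OF inv] by (simp add: q_def finds_fixed_point_Output)
  next
    case moved: False
    show ?thesis
    proof (cases "\<exists>l<k. fa a q ! l < q ! l")
      case True
      define l where "l = (LEAST l. l < k \<and> fa a q ! l < q ! l)"
      have l: "l < k" "fa a q ! l < q ! l"
        using LeastI_ex[OF True] unfolding l_def by auto
      note learn = level_search_inv_learn[OF inv l[unfolded q_def]]
      have "card (insert l D) = Suc (card D)" "card (insert l D) \<le> k"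
        using learn(1) inv l(1) finite_subset[of D "{..<k}"]
          card_mono[of "{..<k}" "insert l D"] by (auto simp: level_search_inv_def)
      then have "(k - card (insert l D)) + (n - t) \<le> m"
        using Suc.prems(2) by linarith
      then show ?thesis
        using Suc.IH[OF learn(2)] moved True by (simp add: l_def Let_def)
    next
      case False
      have raise: "level_search_inv a n k b D (Suc t)"
        using level_search_inv_raise[OF inv] moved False by (simp add: q_def)
      then have "(k - card D) + (n - Suc t) \<le> m"
        using Suc.prems(2) by (simp add: level_search_inv_def)
      then show ?thesis
        using Suc.IH[OF raise] moved False by auto
    qed
  qed
  with probe_in_lattice[OF inv] show ?case
    unfolding level_search.simps Let_def q_def
    by (rule finds_fixed_point_Ask)
qed

definition fixed_point_search :: "nat \<Rightarrow> nat \<Rightarrow> qtree" where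
  "fixed_point_search n k = (if k = 0 then Output [] else level_search (k + n) n k (replicate k 0) {} 0)"

lemma fixed_point_search_correct:
  assumes "a \<in> lattice n k"
  shows "finds_fixed_point a n k (k + n) (fixed_point_search n k)"
proof (cases "k = 0")
  case True
  then show ?thesis
    by (simp add: fixed_point_search_def finds_fixed_point_Output lattice_def fa_def)
next
  case False
  then have "level_search_inv a n k (replicate k 0) {} 0"
    using assms by (auto simp: level_search_inv_def lattice_def)
  then show ?thesis
    using level_search_correct False by (simp add: fixed_point_search_def)
qed

theorem proposition10:
  shows "\<exists>(C::nat) > 0. \<exists>A :: nat \<Rightarrow> nat \<Rightarrow> qtree.
           \<forall>n k a. a \<in> lattice n k \<longrightarrow>
             (let r = run (fa a) (A n k) in
                fst r \<in> lattice n k \<and> fa a (fst r) = fst r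
              \<and> set (snd r) \<subseteq> lattice n k
              \<and> length (snd r) \<le> C * (k + n))"
  using fixed_point_search_correct unfolding finds_fixed_point_def
  by (intro exI[of _ 1] conjI exI[of _ fixed_point_search]) auto

end
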